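(* In a Gibbs-type feature model with parameters $\alpha<1$, $\theta>-\alpha$ and weights $(V_{n,k})$, let $\mathbf Z^{(n)}$ be a sample with $K_n=k$ observed features and, for $m\ge1$, let $K^{(n)}_m$ be the number of distinct features displayed by individuals $n+1,\dots,n+m$ that are not among the $k$ features observed in $\mathbf Z^{(n)}$. Then for every $y\ge0$, $$P(K^{(n)}_m=y\mid\mathbf Z^{(n)})=\binom{k+y}{k}\frac{V_{n+m,k+y}}{V_{n,k}}\{(\theta+n)_m\}^{k+y}\{c_{n,m}(\theta,\alpha)\}^y,$$ where $c_{n,m}(\theta,\alpha)=\frac{(\theta+\alpha)_n}{\alpha}\Big(\frac{(\theta+\alpha+n)_m}{(\theta+n)_m}-1\Big)$ if $\alpha<0$, and $c_{n,m}(\theta,\alpha)=(\theta+1)_{n-1}\{g_{n+m}(\theta,\alpha)-g_n(\theta,\alpha)\}$ if $\alpha\in[0,1)$, with $g_n(\theta,\alpha)=\sum_{i=1}^n\frac{(\theta+\alpha)_{i-1}}{(\theta+1)_{i-1}}$.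
   Context: Notation: $(x)_m=\Gamma(x+m)/\Gamma(x)$ (Pochhammer symbol); $[n]=\{1,\dots,n\}$. Individuals $i=1,2,\dots$ each display a finite (possibly empty) set of features, identified by almost surely distinct labels. For the sample $\mathbf Z^{(n)}=(Z_1,\dots,Z_n)$ of the first $n$ individuals, $K_n$ is the number of distinct features displayed, labelled $X_1,\dots,X_{K_n}$ in order of appearance; $A_{i,\ell}\in\{0,1\}$ indicates whether individual $i$ displays $X_\ell$, and $m_\ell=\sum_{i=1}^nA_{i,\ell}\in[n]$. The ordered feature allocation is $F_n=(B_{n,1},\dots,B_{n,K_n})$, $B_{n,\ell}=\{i\in[n]:A_{i,\ell}=1\}$. The model admits an exchangeable feature probability function (EFPF) if there are symmetric functions $\pi_n:\bigcup_{k\ge0}[n]^k\to[0,1]$ with $P(F_n=f_n)=\pi_n(m_1,\dots,m_k)$ for every ordered feature allocation $f_n$ of $[n]$ (a sequence of $k$ nonempty subsets of $[n]$ with sizes $m_1,\dots,m_k$), all orderings of the same collection of sets being equally likely; the laws for different $n$ are consistent. The model is a Gibbs-type feature model with parameters $\alpha<1$, $\theta>-\alpha$ if $\pi_n(m_1,\dots,m_k)=V_{n,k}\prod_{\ell=1}^k(1-\alpha)_{m_\ell-1}(\theta+\alpha)_{n-m_\ell}$ for nonnegative weights $(V_{n,k})_{n\ge1,k\ge0}$ satisfying $V_{n,k}=\sum_{j\ge0}\frac{(k+j)!}{j!\,k!}\{(\theta+\alpha)_n\}^j(\theta+n)^kV_{n+1,k+j}$. *)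

theory Defs
  imports "HOL-Probability.Probability"
begin

definition is_ofa :: "nat \<Rightarrow> nat set list \<Rightarrow> bool" where
  "is_ofa n f \<longleftrightarrow> (\<forall>B \<in> set f. B \<noteq> {} \<and> B \<subseteq> {1..n})"

definition restr :: "nat \<Rightarrow> nat set list \<Rightarrow> nat set list" where
  "restr n f = filter (\<lambda>B. B \<noteq> {}) (map (\<lambda>B. B \<inter> {1..n}) f)"

definition gibbs_efpf :: "real \<Rightarrow> real \<Rightarrow> (nat \<Rightarrow> nat \<Rightarrow> real) \<Rightarrow> nat \<Rightarrow> nat list \<Rightarrow> real" where
  "gibbs_efpf \<alpha> \<theta> V n ms = V n (length ms) *
     prod_list (map (\<lambda>m. pochhammer (1 - \<alpha>) (m - 1) * pochhammer (\<theta> + \<alpha>) (n - m)) ms)"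

definition gibbs_weights :: "real \<Rightarrow> real \<Rightarrow> (nat \<Rightarrow> nat \<Rightarrow> real) \<Rightarrow> bool" where
  "gibbs_weights \<alpha> \<theta> V \<longleftrightarrow> \<alpha> < 1 \<and> \<theta> > - \<alpha> \<and>
     (\<forall>n k. n \<ge> 1 \<longrightarrow> V n k \<ge> 0) \<and>
     (\<forall>n k. n \<ge> 1 \<longrightarrow>
        (\<lambda>j. real (fact (k + j)) / (real (fact j) * real (fact k))
              * (pochhammer (\<theta> + \<alpha>) n) ^ j * (\<theta> + real n) ^ k * V (n + 1) (k + j))
        sums V n k)"

definition g_fun :: "nat \<Rightarrow> real \<Rightarrow> real \<Rightarrow> real" where
  "g_fun n \<theta> \<alpha> = (\<Sum>i=1..n. pochhammer (\<theta> + \<alpha>) (i - 1) / pochhammer (\<theta> + 1) (i - 1))"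

definition c_fun :: "nat \<Rightarrow> nat \<Rightarrow> real \<Rightarrow> real \<Rightarrow> real" where
  "c_fun n m \<theta> \<alpha> =
     (if \<alpha> < 0
      then pochhammer (\<theta> + \<alpha>) n / \<alpha> *
             (pochhammer (\<theta> + \<alpha> + real n) m / pochhammer (\<theta> + real n) m - 1)
      else pochhammer (\<theta> + 1) (n - 1) * (g_fun (n + m) \<theta> \<alpha> - g_fun n \<theta> \<alpha>))"

end

theory Submission
  imports Defs
begin

text \<open>The numerator is the EFPF of the first \<open>n + m\<close> individuals summed over all ordered feature
  allocations that restrict to \<open>f\<close>. Add the individuals \<open>N + 1\<close> one at a time: an old block \<open>B\<close>
  either stays or gains \<open>N + 1\<close>, and these two block weights add up to \<open>\<theta> + N\<close> times the weight of
  \<open>B\<close> among \<open>N\<close> individuals; every new feature is the singleton \<open>{N + 1}\<close>, of weight \<open>(\<theta> + \<alpha>)_N\<close>,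
  and the new features may be interleaved anywhere in the list, which produces a binomial
  coefficient. Iterating over the \<open>m\<close> new individuals is a binomial convolution, and it closes up
  because both branches of \<open>c_{n,m}\<close> satisfy
  \<open>c_{n,m+1} (\<theta> + n)_{m+1} = c_{n,m} (\<theta> + n)_{m+1} + (\<theta> + \<alpha>)_{n+m}\<close>.
  Only the EFPF at sizes \<open>n\<close> and \<open>n + m\<close> enters.\<close>

lemma restr_Nil [simp]: "restr N [] = []"
  by (simp add: restr_def)

lemma restr_Cons:
  "restr N (B # g) = (if B \<inter> {1..N} = {} then restr N g else (B \<inter> {1..N}) # restr N g)"
  by (simp add: restr_def)

lemma is_ofa_Nil [simp]: "is_ofa N []"
  by (simp add: is_ofa_def)

lemma is_ofa_Cons [simp]: "is_ofa N (B # g) \<longleftrightarrow> B \<noteq> {} \<and> B \<subseteq> {1..N} \<and> is_ofa N g"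
  by (simp add: is_ofa_def)

lemma restr_restr: "a \<le> b \<Longrightarrow> restr a (restr b g) = restr a g"
  by (induction g) (auto simp: restr_Cons)

lemma restr_id: "is_ofa N g \<Longrightarrow> restr N g = g"
  by (induction g) (auto simp: restr_Cons Int_absorb2)

lemma length_restr_le: "length (restr N g) \<le> length g"
  by (simp add: restr_def length_filter_le)

lemma is_ofa_restr: "is_ofa N (restr N g)"
  by (induction g) (auto simp: restr_Cons)

lemma finite_is_ofa_length_le: "finite {g. is_ofa N g \<and> length g \<le> L}"
  by (rule finite_subset[of _ "{xs. set xs \<subseteq> Pow {1..N} \<and> length xs \<le> L}"])
     (auto simp: is_ofa_def intro!: finite_lists_length_le)

lemma restr_consistent_le:
  assumes "\<And>N. is_ofa N (G N)" and "\<And>N. G N = restr N (G (Suc N))" and "n \<le> N"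
  shows "G n = restr n (G N)"
  using \<open>n \<le> N\<close>
proof (induction rule: dec_induct)
  case base
  show ?case using restr_id[OF assms(1)] by simp
next
  case (step N)
  then show ?case using assms(2)[of N] restr_restr[of n N] by simp
qed

definition extensions :: "nat \<Rightarrow> nat set list \<Rightarrow> nat \<Rightarrow> nat \<Rightarrow> nat set list set" where
  "extensions n f N L = {g. is_ofa N g \<and> restr n g = f \<and> length g = L}"

lemma finite_extensions: "finite (extensions n f N L)"
  by (rule finite_subset[OF _ finite_is_ofa_length_le[of N L]]) (auto simp: extensions_def)

lemma extensions_self:
  assumes "is_ofa n f"
  shows "extensions n f n L = (if L = length f then {f} else {})"
proof -
  have "g \<in> extensions n f n L \<longleftrightarrow> g = f \<and> L = length f" for g
  proof
    assume "g \<in> extensions n f n L"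
    then have "is_ofa n g" "restr n g = f" "length g = L" by (simp_all add: extensions_def)
    then show "g = f \<and> L = length f" by (simp add: restr_id)
  qed (simp add: extensions_def restr_id assms)
  then show ?thesis by (intro set_eqI) simp
qed

lemma new_features_iff_extensions:
  assumes "\<And>N. is_ofa N (G N)" and "\<And>N. G N = restr N (G (Suc N))"
  shows "(length (G (n + m)) - length (G n) = y \<and> G n = f) \<longleftrightarrow>
    G (n + m) \<in> extensions n f (n + m) (length f + y)"
proof -
  have restr: "G n = restr n (G (n + m))"
    using restr_consistent_le[OF assms] by simp
  have "length (G n) \<le> length (G (n + m))"
    unfolding restr by (rule length_restr_le)
  then show ?thesis
    using assms(1)[of "n + m"] unfolding extensions_def restr by auto
qed

lemma Cons_in_extensions_Suc_iff:
  assumes "is_ofa N h"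
  shows "B # g \<in> extensions N h (Suc N) (Suc L) \<longleftrightarrow>
    B = {Suc N} \<and> g \<in> extensions N h (Suc N) L \<or>
    (\<exists>b h'. h = b # h' \<and> (B = b \<or> B = insert (Suc N) b) \<and> g \<in> extensions N h' (Suc N) L)"
  (is "?lhs \<longleftrightarrow> ?new \<or> ?old")
proof
  assume ?lhs
  then have B: "B \<noteq> {}" "B \<subseteq> {1..Suc N}" and h: "h = restr N (B # g)"
    and g: "is_ofa (Suc N) g" "length g = L"
    by (auto simp: extensions_def)
  have split: "B = B \<inter> {1..N} \<or> B = insert (Suc N) (B \<inter> {1..N})"
    using B(2) by (auto simp: atLeastAtMostSuc_conv)
  show "?new \<or> ?old"
  proof (cases "B \<inter> {1..N} = {}")
    case True
    then have "B = {Suc N}" using B split by auto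
    then show ?thesis using True h g by (auto simp: extensions_def restr_Cons)
  next
    case False
    then show ?thesis using h g split by (auto simp: extensions_def restr_Cons)
  qed
next
  assume "?new \<or> ?old"
  then show ?lhs
  proof
    assume ?new
    then show ?lhs by (auto simp: extensions_def restr_Cons)
  next
    assume ?old
    then obtain b h' where h: "h = b # h'" and B: "B = b \<or> B = insert (Suc N) b"
      and g: "g \<in> extensions N h' (Suc N) L" by blast
    have b: "b \<noteq> {}" "b \<subseteq> {1..N}" using assms h by auto
    then have "B \<inter> {1..N} = b" "B \<noteq> {}" "B \<subseteq> {1..Suc N}" using B by auto
    then show ?lhs using b g h by (auto simp: extensions_def restr_Cons)
  qed
qed

lemma mem_extensions_Suc_iff:
  "g \<in> extensions n f N (Suc L) \<longleftrightarrow> (\<exists>B g'. g = B # g' \<and> B # g' \<in> extensions n f N (Suc L))"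
  by (cases g) (auto simp: extensions_def)

lemma extensions_Suc_Nil:
  "extensions N [] (Suc N) (Suc L) = Cons {Suc N} ` extensions N [] (Suc N) L"
  by (rule set_eqI, subst mem_extensions_Suc_iff, subst Cons_in_extensions_Suc_iff) auto

lemma extensions_Suc_Cons:
  assumes "is_ofa N (b # h)"
  shows "extensions N (b # h) (Suc N) (Suc L) =
    Cons {Suc N} ` extensions N (b # h) (Suc N) L \<union>
    (Cons b ` extensions N h (Suc N) L \<union> Cons (insert (Suc N) b) ` extensions N h (Suc N) L)"
  by (rule set_eqI, subst mem_extensions_Suc_iff, subst Cons_in_extensions_Suc_iff[OF assms]) auto

definition block_weight :: "real \<Rightarrow> real \<Rightarrow> nat \<Rightarrow> nat set \<Rightarrow> real" where
  "block_weight \<alpha> \<theta> N B = pochhammer (1 - \<alpha>) (card B - 1) * pochhammer (\<theta> + \<alpha>) (N - card B)"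

definition ofa_weight :: "real \<Rightarrow> real \<Rightarrow> nat \<Rightarrow> nat set list \<Rightarrow> real" where
  "ofa_weight \<alpha> \<theta> N g = prod_list (map (block_weight \<alpha> \<theta> N) g)"

lemma ofa_weight_Nil [simp]: "ofa_weight \<alpha> \<theta> N [] = 1"
  by (simp add: ofa_weight_def)

lemma ofa_weight_Cons [simp]: "ofa_weight \<alpha> \<theta> N (B # g) = block_weight \<alpha> \<theta> N B * ofa_weight \<alpha> \<theta> N g"
  by (simp add: ofa_weight_def)

lemma gibbs_efpf_eq_ofa_weight:
  "gibbs_efpf \<alpha> \<theta> V N (map card g) = V N (length g) * ofa_weight \<alpha> \<theta> N g"
  unfolding gibbs_efpf_def ofa_weight_def block_weight_def[abs_def] map_map comp_def by simp

lemma block_weight_singleton_Suc: "block_weight \<alpha> \<theta> (Suc N) {Suc N} = pochhammer (\<theta> + \<alpha>) N"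
  by (simp add: block_weight_def)

lemma block_weight_Suc_add_insert:
  assumes "B \<noteq> {}" and "B \<subseteq> {1..N}"
  shows "block_weight \<alpha> \<theta> (Suc N) B + block_weight \<alpha> \<theta> (Suc N) (insert (Suc N) B) =
    (\<theta> + real N) * block_weight \<alpha> \<theta> N B"
proof -
  define t where "t = card B - 1"
  have "finite B" "Suc N \<notin> B" using assms(2) finite_subset by auto
  then have card: "card B = Suc t" "card (insert (Suc N) B) = Suc (Suc t)"
    using assms(1) by (auto simp: t_def card_gt_0_iff)
  have "t < N" using card_mono[OF _ assms(2)] card(1) by simp
  then have "Suc N - Suc t = Suc (N - Suc t)" "real (N - Suc t) = real N - real t - 1" by auto
  then show ?thesis
    by (simp add: block_weight_def card pochhammer_Suc algebra_simps)
qed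

lemma of_nat_choose_Suc_Suc_mult_power:
  fixes a :: "'a::comm_semiring_1"
  shows "of_nat (Suc L choose Suc K) * a ^ (Suc L - Suc K) =
    a * (of_nat (L choose Suc K) * a ^ (L - Suc K)) + of_nat (L choose K) * a ^ (L - K)"
proof (cases "K < L")
  case True
  then have "L - K = Suc (L - Suc K)" by simp
  then show ?thesis by (simp add: algebra_simps)
next
  case False
  then show ?thesis by (cases "K = L") (simp_all add: binomial_eq_0)
qed

lemma sum_ofa_weight_extensions_Suc:
  assumes "is_ofa N h"
  shows "(\<Sum>g\<in>extensions N h (Suc N) L. ofa_weight \<alpha> \<theta> (Suc N) g) =
    real (L choose length h) * pochhammer (\<theta> + \<alpha>) N ^ (L - length h) * (\<theta> + real N) ^ length h
      * ofa_weight \<alpha> \<theta> N h"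
  using assms
proof (induction L arbitrary: h)
  case 0
  then have "extensions N h (Suc N) 0 = (if h = [] then {[]} else {})"
    by (auto simp: extensions_def)
  then show ?case by simp
next
  case (Suc L)
  define a where "a = pochhammer (\<theta> + \<alpha>) N"
  define w where "w = (\<lambda>h. \<Sum>g\<in>extensions N h (Suc N) L. ofa_weight \<alpha> \<theta> (Suc N) g)"
  have sum_Cons: "(\<Sum>g\<in>Cons B ` A. ofa_weight \<alpha> \<theta> (Suc N) g) =
      block_weight \<alpha> \<theta> (Suc N) B * (\<Sum>g\<in>A. ofa_weight \<alpha> \<theta> (Suc N) g)" for B A
    by (subst sum.reindex) (auto simp: sum_distrib_left)
  show ?case
  proof (cases h)
    case Nil
    then show ?thesis
      using Suc by (simp add: extensions_Suc_Nil sum_Cons block_weight_singleton_Suc)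
  next
    case (Cons b h')
    have b: "b \<noteq> {}" "b \<subseteq> {1..N}" and h': "is_ofa N h'" using Suc.prems Cons by auto
    define K where "K = length h'"
    have "Cons {Suc N} ` X \<inter> (Cons b ` Y \<union> Cons (insert (Suc N) b) ` Y) = {}"
      and "Cons b ` Y \<inter> Cons (insert (Suc N) b) ` Y = {}" for X Y
      using b by auto
    then have sum_ext: "(\<Sum>g\<in>extensions N h (Suc N) (Suc L). ofa_weight \<alpha> \<theta> (Suc N) g) =
        a * w h + (block_weight \<alpha> \<theta> (Suc N) b + block_weight \<alpha> \<theta> (Suc N) (insert (Suc N) b)) * w h'"
      unfolding Cons extensions_Suc_Cons[OF Suc.prems[unfolded Cons]] w_def
      by (simp add: sum.union_disjoint finite_extensions sum_Cons block_weight_singleton_Suc a_def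
          algebra_simps)
    have "w h = real (L choose Suc K) * a ^ (L - Suc K) * (\<theta> + real N) ^ Suc K * ofa_weight \<alpha> \<theta> N h"
      using Suc.IH[OF Suc.prems] Cons by (simp add: w_def a_def K_def)
    moreover have "w h' = real (L choose K) * a ^ (L - K) * (\<theta> + real N) ^ K * ofa_weight \<alpha> \<theta> N h'"
      using Suc.IH[OF h'] by (simp add: w_def a_def K_def)
    ultimately have "(\<Sum>g\<in>extensions N h (Suc N) (Suc L). ofa_weight \<alpha> \<theta> (Suc N) g) =
        (a * (real (L choose Suc K) * a ^ (L - Suc K)) + real (L choose K) * a ^ (L - K))
        * (\<theta> + real N) ^ Suc K * ofa_weight \<alpha> \<theta> N h"
      unfolding sum_ext block_weight_Suc_add_insert[OF b] using Cons
      by (simp add: algebra_simps)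
    then show ?thesis
      using Cons by (simp add: a_def K_def of_nat_choose_Suc_Suc_mult_power[where 'a=real, symmetric])
  qed
qed

lemma sum_choose_mult_choose_power:
  fixes a b c :: "'a::comm_semiring_1"
  shows "(\<Sum>j\<le>L. of_nat (L choose j) * a ^ (L - j) * b ^ j * (of_nat (j choose k) * c ^ (j - k))) =
    of_nat (L choose k) * b ^ k * (b * c + a) ^ (L - k)"
proof (cases "k \<le> L")
  case False
  then show ?thesis by (auto intro!: sum.neutral simp: binomial_eq_0)
next
  case True
  then obtain r where L: "L = k + r" using le_Suc_ex by blast
  let ?f = "\<lambda>j. of_nat (L choose j) * a ^ (L - j) * b ^ j * (of_nat (j choose k) * c ^ (j - k)) :: 'a"
  have "(\<Sum>j\<le>L. ?f j) = (\<Sum>j=0+k..r+k. ?f j)"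
    by (rule sum.mono_neutral_right) (auto simp: L binomial_eq_0)
  also have "\<dots> = (\<Sum>i\<le>r. ?f (i + k))"
    by (simp only: sum.shift_bounds_cl_nat_ivl atLeast0AtMost)
  also have "\<dots> = (\<Sum>i\<le>r. of_nat (L choose k) * b ^ k * (of_nat (r choose i) * (b * c) ^ i * a ^ (r - i)))"
  proof (rule sum.cong[OF refl])
    fix i assume "i \<in> {..r}"
    then have "(L choose (i + k)) * ((i + k) choose k) = (L choose k) * (r choose i)"
      and diff: "L - (i + k) = r - i"
      using choose_mult[of k "i + k" L] by (auto simp: L)
    then have choose: "of_nat (L choose (i + k)) * of_nat ((i + k) choose k) =
        (of_nat (L choose k) * of_nat (r choose i) :: 'a)"
      by (metis of_nat_mult)
    have "?f (i + k) = (of_nat (L choose (i + k)) * of_nat ((i + k) choose k)) * a ^ (r - i) * (b ^ k * b ^ i) * c ^ i"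
      by (simp add: diff power_add mult_ac)
    also have "\<dots> = of_nat (L choose k) * b ^ k * (of_nat (r choose i) * (b * c) ^ i * a ^ (r - i))"
      unfolding choose by (simp add: power_mult_distrib mult_ac)
    finally show "?f (i + k) = of_nat (L choose k) * b ^ k * (of_nat (r choose i) * (b * c) ^ i * a ^ (r - i))" .
  qed
  also have "\<dots> = of_nat (L choose k) * b ^ k * (b * c + a) ^ r"
    by (simp add: binomial_ring[of "b * c" a r] sum_distrib_left)
  finally show ?thesis by (simp add: L)
qed

lemma g_fun_Suc: "g_fun (Suc k) \<theta> \<alpha> = g_fun k \<theta> \<alpha> + pochhammer (\<theta> + \<alpha>) k / pochhammer (\<theta> + 1) k"
  by (simp add: g_fun_def sum.cl_ivl_Suc)

lemma c_fun_Suc_mult_pochhammer: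
  assumes "\<alpha> < 1" and "\<theta> > -\<alpha>" and "n \<ge> 1"
  shows "c_fun n (Suc m) \<theta> \<alpha> * pochhammer (\<theta> + real n) (Suc m) =
    c_fun n m \<theta> \<alpha> * pochhammer (\<theta> + real n) (Suc m) + pochhammer (\<theta> + \<alpha>) (n + m)"
proof (cases "\<alpha> < 0")
  case True
  define x where "x = \<theta> + real n + real m"
  have "\<theta> + real n > 0" using assms True by simp
  then have P: "pochhammer (\<theta> + real n) m \<noteq> 0" and "x \<noteq> 0"
    using pochhammer_pos[of "\<theta> + real n" m] by (auto simp: x_def)
  have "A / \<alpha> * (Q * (x + \<alpha>) / (P * x) - 1) * (P * x) = A / \<alpha> * (Q / P - 1) * (P * x) + A * Q"
    if "P \<noteq> 0" for A Q P :: real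
    using that \<open>x \<noteq> 0\<close> True by (simp add: field_simps)
  from this[OF P, of "pochhammer (\<theta> + \<alpha>) n" "pochhammer (\<theta> + \<alpha> + real n) m"]
  show ?thesis
    using True pochhammer_product'[of "\<theta> + \<alpha>" n m]
    by (simp add: c_fun_def pochhammer_Suc x_def add_ac)
next
  case False
  define R where "R = pochhammer (\<theta> + 1) (n - 1)"
  have "\<theta> + 1 > 0" using assms False by simp
  then have "pochhammer (\<theta> + 1) (n + m) > 0"
    by (rule pochhammer_pos)
  moreover have R: "R * pochhammer (\<theta> + real n) (Suc m) = pochhammer (\<theta> + 1) (n + m)"
    using pochhammer_product'[of "\<theta> + 1" "n - 1" "Suc m"] assms(3)
    by (simp add: R_def of_nat_diff algebra_simps)
  moreover have "c_fun n (Suc m) \<theta> \<alpha> =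
      c_fun n m \<theta> \<alpha> + R * (pochhammer (\<theta> + \<alpha>) (n + m) / pochhammer (\<theta> + 1) (n + m))"
    using False by (simp add: c_fun_def R_def g_fun_Suc algebra_simps)
  then have "c_fun n (Suc m) \<theta> \<alpha> * pochhammer (\<theta> + real n) (Suc m) =
      c_fun n m \<theta> \<alpha> * pochhammer (\<theta> + real n) (Suc m) + R * pochhammer (\<theta> + real n) (Suc m)
        * (pochhammer (\<theta> + \<alpha>) (n + m) / pochhammer (\<theta> + 1) (n + m))"
    by (simp add: algebra_simps)
  ultimately show ?thesis
    by simp
qed

lemma sum_extensions_Suc:
  assumes "n \<le> N"
  shows "(\<Sum>g\<in>extensions n f (Suc N) L. w g) =
    (\<Sum>L'\<le>L. \<Sum>h\<in>extensions n f N L'. \<Sum>g\<in>extensions N h (Suc N) L. w g)"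
proof -
  define T where "T = {h. is_ofa N h \<and> restr n h = f \<and> length h \<le> L}"
  have "finite T"
    by (rule finite_subset[OF _ finite_is_ofa_length_le[of N L]]) (auto simp: T_def)
  have "(\<Sum>g\<in>extensions n f (Suc N) L. w g) =
      (\<Sum>h\<in>T. \<Sum>g\<in>{g \<in> extensions n f (Suc N) L. restr N g = h}. w g)"
    using length_restr_le restr_restr[OF assms] is_ofa_restr
    by (intro sum.group[symmetric, OF finite_extensions \<open>finite T\<close>]) (auto simp: extensions_def T_def)
  also have "\<dots> = (\<Sum>h\<in>T. \<Sum>g\<in>extensions N h (Suc N) L. w g)"
    using restr_restr[OF assms]
    by (intro sum.cong refl arg_cong2[where f = sum]) (auto simp: extensions_def T_def)
  also have "\<dots> = (\<Sum>L'\<le>L. \<Sum>h\<in>{h \<in> T. length h = L'}. \<Sum>g\<in>extensions N h (Suc N) L. w g)"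
    by (rule sum.group[symmetric, OF \<open>finite T\<close>]) (auto simp: T_def)
  also have "\<dots> = (\<Sum>L'\<le>L. \<Sum>h\<in>extensions n f N L'. \<Sum>g\<in>extensions N h (Suc N) L. w g)"
    by (intro sum.cong refl arg_cong2[where f = sum]) (auto simp: extensions_def T_def)
  finally show ?thesis .
qed

lemma sum_ofa_weight_extensions:
  assumes "is_ofa n f" and "\<alpha> < 1" and "\<theta> > -\<alpha>" and "n \<ge> 1"
  shows "(\<Sum>g\<in>extensions n f (n + m) L. ofa_weight \<alpha> \<theta> (n + m) g) =
    real (L choose length f) * pochhammer (\<theta> + real n) m ^ L * c_fun n m \<theta> \<alpha> ^ (L - length f)
      * ofa_weight \<alpha> \<theta> n f"
proof (induction m arbitrary: L)
  case 0
  show ?case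
  proof (cases "L = length f")
    case False
    then have "L < length f \<or> L - length f > 0" by linarith
    then show ?thesis
      using False by (auto simp: extensions_self[OF assms(1)] binomial_eq_0 c_fun_def)
  qed (simp add: extensions_self[OF assms(1)])
next
  case (Suc m)
  define k where "k = length f"
  define a where "a = pochhammer (\<theta> + \<alpha>) (n + m)"
  define b where "b = \<theta> + real (n + m)"
  define P where "P = pochhammer (\<theta> + real n) m"
  define W where "W = ofa_weight \<alpha> \<theta> n f"
  have bP: "b * P = pochhammer (\<theta> + real n) (Suc m)"
    by (simp add: b_def P_def pochhammer_Suc)
  have "(\<Sum>g\<in>extensions n f (n + Suc m) L. ofa_weight \<alpha> \<theta> (n + Suc m) g) =
      (\<Sum>L'\<le>L. \<Sum>h\<in>extensions n f (n + m) L'. \<Sum>g\<in>extensions (n + m) h (Suc (n + m)) L.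
        ofa_weight \<alpha> \<theta> (Suc (n + m)) g)"
    using sum_extensions_Suc[of n "n + m"] by simp
  also have "\<dots> = (\<Sum>L'\<le>L. \<Sum>h\<in>extensions n f (n + m) L'.
      real (L choose L') * a ^ (L - L') * b ^ L' * ofa_weight \<alpha> \<theta> (n + m) h)"
  proof (intro sum.cong refl)
    fix L' h assume "h \<in> extensions n f (n + m) L'"
    then have "is_ofa (n + m) h" "length h = L'" by (simp_all add: extensions_def)
    then show "(\<Sum>g\<in>extensions (n + m) h (Suc (n + m)) L. ofa_weight \<alpha> \<theta> (Suc (n + m)) g) =
        real (L choose L') * a ^ (L - L') * b ^ L' * ofa_weight \<alpha> \<theta> (n + m) h"
      by (simp add: sum_ofa_weight_extensions_Suc a_def b_def)
  qed
  also have "\<dots> = (\<Sum>L'\<le>L. real (L choose L') * a ^ (L - L') * b ^ L'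
      * (real (L' choose k) * P ^ L' * c_fun n m \<theta> \<alpha> ^ (L' - k) * W))"
    unfolding sum_distrib_left[symmetric] Suc.IH by (simp add: k_def P_def W_def)
  also have "\<dots> = W * (\<Sum>L'\<le>L. real (L choose L') * a ^ (L - L') * (b * P) ^ L'
      * (real (L' choose k) * c_fun n m \<theta> \<alpha> ^ (L' - k)))"
    by (simp add: sum_distrib_left power_mult_distrib mult_ac)
  also have "\<dots> = W * (real (L choose k) * (b * P) ^ k * (b * P * c_fun n m \<theta> \<alpha> + a) ^ (L - k))"
    by (simp only: sum_choose_mult_choose_power)
  also have "b * P * c_fun n m \<theta> \<alpha> + a = b * P * c_fun n (Suc m) \<theta> \<alpha>"
    using c_fun_Suc_mult_pochhammer[OF assms(2-4), of m] by (simp add: bP[symmetric] a_def mult_ac)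
  also have "W * (real (L choose k) * (b * P) ^ k * (b * P * c_fun n (Suc m) \<theta> \<alpha>) ^ (L - k)) =
      real (L choose k) * (b * P) ^ L * c_fun n (Suc m) \<theta> \<alpha> ^ (L - k) * W"
  proof (cases "k \<le> L")
    case True
    then have "(b * P) ^ L = (b * P) ^ k * (b * P) ^ (L - k)" by (simp flip: power_add)
    then show ?thesis by (simp add: power_mult_distrib)
  qed (simp add: binomial_eq_0)
  finally show ?case
    by (simp add: bP k_def W_def)
qed

lemma measure_new_features_eq_sum:
  assumes "finite_measure M"
    and "\<And>N \<omega>. \<omega> \<in> space M \<Longrightarrow> is_ofa N (F N \<omega>)"
    and "\<And>N g. {\<omega> \<in> space M. F N \<omega> = g} \<in> sets M"
    and "\<And>N \<omega>. \<omega> \<in> space M \<Longrightarrow> F N \<omega> = restr N (F (Suc N) \<omega>)"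
  shows "measure M {\<omega> \<in> space M. length (F (n + m) \<omega>) - length (F n \<omega>) = y \<and> F n \<omega> = f} =
    (\<Sum>g\<in>extensions n f (n + m) (length f + y). measure M {\<omega> \<in> space M. F (n + m) \<omega> = g})"
proof -
  interpret finite_measure M by fact
  have "(length (F (n + m) \<omega>) - length (F n \<omega>) = y \<and> F n \<omega> = f) \<longleftrightarrow>
      F (n + m) \<omega> \<in> extensions n f (n + m) (length f + y)" if "\<omega> \<in> space M" for \<omega>
    using new_features_iff_extensions[of "\<lambda>N. F N \<omega>", OF assms(2,4)[OF that]] .
  then have "{\<omega> \<in> space M. length (F (n + m) \<omega>) - length (F n \<omega>) = y \<and> F n \<omega> = f} =
      (\<Union>g\<in>extensions n f (n + m) (length f + y). {\<omega> \<in> space M. F (n + m) \<omega> = g})"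
    by blast
  then have "measure M {\<omega> \<in> space M. length (F (n + m) \<omega>) - length (F n \<omega>) = y \<and> F n \<omega> = f} =
      measure M (\<Union>g\<in>extensions n f (n + m) (length f + y). {\<omega> \<in> space M. F (n + m) \<omega> = g})"
    by simp
  also have "\<dots> = (\<Sum>g\<in>extensions n f (n + m) (length f + y). measure M {\<omega> \<in> space M. F (n + m) \<omega> = g})"
    by (rule finite_measure_finite_Union) (auto simp: finite_extensions assms(3) disjoint_family_on_def)
  finally show ?thesis .
qed

theorem theorem3:
  fixes M :: "'a measure" and F :: "nat \<Rightarrow> 'a \<Rightarrow> nat set list"
    and \<alpha> \<theta> :: real and V :: "nat \<Rightarrow> nat \<Rightarrow> real"
    and n m k y :: nat and f :: "nat set list"
  assumes "prob_space M"
    and "gibbs_weights \<alpha> \<theta> V"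
    and ofa: "\<And>N \<omega>. \<omega> \<in> space M \<Longrightarrow> is_ofa N (F N \<omega>)"
    and meas: "\<And>N g. {\<omega> \<in> space M. F N \<omega> = g} \<in> sets M"
    and efpf: "\<And>N g. N \<ge> 1 \<Longrightarrow> is_ofa N g \<Longrightarrow>
                 measure M {\<omega> \<in> space M. F N \<omega> = g} = gibbs_efpf \<alpha> \<theta> V N (map card g)"
    and consistent: "\<And>N \<omega>. \<omega> \<in> space M \<Longrightarrow> F N \<omega> = restr N (F (Suc N) \<omega>)"
    and "n \<ge> 1" and "m \<ge> 1"
    and "is_ofa n f" and "length f = k"
    and pos: "measure M {\<omega> \<in> space M. F n \<omega> = f} > 0"
  shows "measure M {\<omega> \<in> space M. length (F (n + m) \<omega>) - length (F n \<omega>) = y \<and> F n \<omega> = f}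
           / measure M {\<omega> \<in> space M. F n \<omega> = f}
         = real ((k + y) choose k) * V (n + m) (k + y) / V n k
           * (pochhammer (\<theta> + real n) m) ^ (k + y) * (c_fun n m \<theta> \<alpha>) ^ y"
proof -
  interpret prob_space M by fact
  have ab: "\<alpha> < 1" "\<theta> > -\<alpha>" using assms(2) by (auto simp: gibbs_weights_def)
  have "measure M {\<omega> \<in> space M. length (F (n + m) \<omega>) - length (F n \<omega>) = y \<and> F n \<omega> = f} =
      (\<Sum>g\<in>extensions n f (n + m) (k + y). measure M {\<omega> \<in> space M. F (n + m) \<omega> = g})"
    using measure_new_features_eq_sum[OF finite_measure_axioms ofa meas consistent] \<open>length f = k\<close>
    by simp
  also have "\<dots> = (\<Sum>g\<in>extensions n f (n + m) (k + y). V (n + m) (k + y) * ofa_weight \<alpha> \<theta> (n + m) g)"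
    using \<open>n \<ge> 1\<close> by (intro sum.cong refl) (simp add: extensions_def efpf gibbs_efpf_eq_ofa_weight)
  also have "\<dots> = V (n + m) (k + y) * (real ((k + y) choose k) * pochhammer (\<theta> + real n) m ^ (k + y)
      * c_fun n m \<theta> \<alpha> ^ y * ofa_weight \<alpha> \<theta> n f)"
    using sum_ofa_weight_extensions[OF \<open>is_ofa n f\<close> ab \<open>n \<ge> 1\<close>] \<open>length f = k\<close>
    by (simp flip: sum_distrib_left)
  finally have num: "measure M {\<omega> \<in> space M. length (F (n + m) \<omega>) - length (F n \<omega>) = y \<and> F n \<omega> = f} =
      V (n + m) (k + y) * (real ((k + y) choose k) * pochhammer (\<theta> + real n) m ^ (k + y)
        * c_fun n m \<theta> \<alpha> ^ y * ofa_weight \<alpha> \<theta> n f)" .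
  have den: "measure M {\<omega> \<in> space M. F n \<omega> = f} = V n k * ofa_weight \<alpha> \<theta> n f"
    using efpf[OF \<open>n \<ge> 1\<close> \<open>is_ofa n f\<close>] \<open>length f = k\<close> by (simp add: gibbs_efpf_eq_ofa_weight)
  with pos have "V n k \<noteq> 0" "ofa_weight \<alpha> \<theta> n f \<noteq> 0" by auto
  then show ?thesis unfolding num den by (simp add: field_simps)
qed

end
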